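(* Let $B$ be the set of irrational $x\in(0,1)$ whose $\bar O^1$-symbols are bounded, i.e. there exists $K_x\in\mathbb{N}$ with $g_k(x)\le K_x$ for all $k\in\mathbb{N}$. Then $\dim_H(B)=0$.
   Context: Every irrational $x\in(0,1)$ has a unique representation ($\bar O^1$-expansion) $$x=\sum_{k=1}^\infty\frac{(-1)^{k-1}}{g_1(g_1+g_2)\cdots(g_1+g_2+\dots+g_k)},\qquad g_k=g_k(x)\in\mathbb{N}=\{1,2,3,\dots\}.$$ The numbers $g_k(x)$ are called the $\bar O^1$-symbols of $x$. $\dim_H$ denotes Hausdorff dimension. *)

theory Defs
  imports "HOL-Analysis.Analysis"
begin

text \<open>Symbols are indexed from 0: g 0 = g_1, g 1 = g_2, ...
  The n-th term (n from 0) is (-1)^n / (S_0 * S_1 * ... * S_n) with S_j = g 0 + ... + g j.\<close>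

definition O1_term :: "(nat \<Rightarrow> nat) \<Rightarrow> nat \<Rightarrow> real" where
  "O1_term g n = (-1) ^ n / (\<Prod>j\<le>n. real (\<Sum>i\<le>j. g i))"

definition O1_expansion :: "real \<Rightarrow> (nat \<Rightarrow> nat) \<Rightarrow> bool" where
  "O1_expansion x g \<longleftrightarrow> (\<forall>k. g k \<ge> 1) \<and> (O1_term g sums x)"

definition O1_symbols :: "real \<Rightarrow> nat \<Rightarrow> nat" where
  "O1_symbols x = (THE g. O1_expansion x g)"

definition hd_weight :: "real \<Rightarrow> real set \<Rightarrow> ennreal" where
  "hd_weight s U = (if U = {} then 0 else if s = 0 then 1 else ennreal (diameter U powr s))"

definition hausdorff_pre :: "real \<Rightarrow> real \<Rightarrow> real set \<Rightarrow> ennreal" where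
  "hausdorff_pre s \<delta> A =
     (INF C \<in> {C :: nat \<Rightarrow> real set. A \<subseteq> (\<Union>i. C i) \<and> (\<forall>i. diameter (C i) \<le> \<delta>)}.
        (\<Sum>i. hd_weight s (C i)))"

definition hausdorff_measure :: "real \<Rightarrow> real set \<Rightarrow> ennreal" where
  "hausdorff_measure s A = (SUP \<delta> \<in> {0<..}. hausdorff_pre s \<delta> A)"

definition hausdorff_dim :: "real set \<Rightarrow> real" where
  "hausdorff_dim A = Inf {s. s \<ge> 0 \<and> hausdorff_measure s A = 0}"

end

theory Submission
  imports Defs
begin

text \<open>
  Write g_k for the symbols of x. The n-th term of the expansion has absolute value
  1 / (S_0 S_1 \<cdots> S_n) with S_j = g_0 + \<dots> + g_j \<ge> j + 1, so the series is alternating with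
  terms decreasing faster than 1/(n+1)!, and the N-th partial sum approximates x within 1/N!.
  If all symbols are at most K, the first N symbols take at most K^N values, so the set of such x
  is covered by K^N intervals of length 2/N!; since K^N (2/N!)^s \<rightarrow> 0 for every s > 0, it has
  Hausdorff dimension 0, and so does the countable union over K.
  That the symbols are well defined uses uniqueness (the first symbol of any expansion of y is
  \<lfloor>1/y\<rfloor>, and dropping it leaves an expansion of 1 - g_0 y) and existence (the greedy
  algorithm y \<mapsto> 1 - \<lfloor>1/y\<rfloor> y, which stays inside the irrationals of (0,1)).
\<close>

lemma alternating_sum_remainder:
  fixes a :: "nat \<Rightarrow> real"
  assumes "a \<longlonglongrightarrow> 0" and "\<And>n. a (Suc n) \<le> a n"
  shows "\<bar>(\<Sum>n. (-1)^n * a n) - (\<Sum>n<N. (-1)^n * a n)\<bar> \<le> a N"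
proof -
  have "decseq a" using assms(2) by (rule decseq_SucI)
  then have nonneg: "0 \<le> a n" for n using assms(1) by (rule decseq_ge)
  note L = summable_Leibniz'[of a, OF assms(1) nonneg assms(2)]
  obtain m where "N = 2 * m \<or> N = 2 * m + 1" by (metis dvd_mult_div_cancel odd_two_times_div_two_succ)
  then show ?thesis
  proof
    assume N: "N = 2 * m"
    have "(\<Sum>n<2 * m + 1. (-1)^n * a n) = (\<Sum>n<N. (-1)^n * a n) + a N"
      using N by simp
    then show ?thesis using L(2)[of m] L(4)[of m] N by simp
  next
    assume N: "N = 2 * m + 1"
    have "(\<Sum>n<2 * Suc m. (-1)^n * a n) = (\<Sum>n<N. (-1)^n * a n) - a N"
      using N by simp
    then show ?thesis using L(2)[of "Suc m"] L(4)[of m] N by simp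
  qed
qed

lemma alternating_sum_first_bounds:
  fixes a :: "nat \<Rightarrow> real"
  assumes "a \<longlonglongrightarrow> 0" and "\<And>n. a (Suc n) < a n"
  shows "a 0 - a 1 < (\<Sum>n. (-1)^n * a n)" and "(\<Sum>n. (-1)^n * a n) \<le> a 0"
proof -
  have mono: "a (Suc n) \<le> a n" for n using assms(2) less_imp_le by blast
  have "decseq a" using mono by (rule decseq_SucI)
  then have nonneg: "0 \<le> a n" for n using assms(1) by (rule decseq_ge)
  note L = summable_Leibniz'[of a, OF assms(1) nonneg mono]
  have "(\<Sum>n<2 * 2. (-1)^n * a n) = a 0 - a 1 + (a 2 - a 3)"
    by (simp add: numeral_eq_Suc)
  moreover have "a 3 < a 2" using assms(2)[of 2] by (simp add: numeral_eq_Suc)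
  ultimately show "a 0 - a 1 < (\<Sum>n. (-1)^n * a n)" using L(2)[of 2] by linarith
  show "(\<Sum>n. (-1)^n * a n) \<le> a 0" using L(4)[of 0] by simp
qed

lemma power_div_fact_tendsto_0: "(\<lambda>N. c ^ N / fact N :: real) \<longlonglongrightarrow> 0"
  using summable_LIMSEQ_zero[OF summable_exp[of c]] by (simp add: divide_inverse mult.commute)

lemma power_mult_fact_powr_tendsto_0:
  fixes s :: real
  assumes "0 < s"
  shows "(\<lambda>N. real K ^ N * (2 / fact N) powr s) \<longlonglongrightarrow> 0"
proof (rule Lim_null_comparison)
  define q where "q = (real K + 1) powr (1 / s)"
  have "(q ^ N) powr s = (real K + 1) ^ N" for N
  proof -
    have "(q ^ N) powr s = (real K + 1) powr (real N * (1 / s) * s)"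
      unfolding q_def by (simp add: powr_power powr_powr)
    also have "\<dots> = (real K + 1) ^ N" using assms by (simp add: powr_realpow)
    finally show ?thesis .
  qed
  then have eq: "(2 * q ^ N / fact N) powr s = (real K + 1) ^ N * (2 / fact N) powr s" for N
    by (simp add: powr_mult powr_divide mult.commute)
  show "\<forall>\<^sub>F N in sequentially. norm (real K ^ N * (2 / fact N) powr s) \<le> (2 * q ^ N / fact N) powr s"
    unfolding eq by (intro always_eventually allI) (simp add: power_mono mult_right_mono)
  have "(\<lambda>N. 2 * (q ^ N / fact N)) \<longlonglongrightarrow> 2 * 0"
    by (intro tendsto_mult tendsto_const power_div_fact_tendsto_0)
  then show "(\<lambda>N. (2 * q ^ N / fact N) powr s) \<longlonglongrightarrow> 0"
    using assms by (intro tendsto_zero_powrI) (auto simp: q_def)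
qed

section \<open>Hausdorff pre-measure and interval covers\<close>

lemma hausdorff_pre_le_cover:
  assumes "A \<subseteq> (\<Union>i. C i)" and "\<And>i. diameter (C i) \<le> \<delta>"
  shows "hausdorff_pre s \<delta> A \<le> (\<Sum>i. hd_weight s (C i))"
  unfolding hausdorff_pre_def using assms by (intro INF_lower) blast

lemma hausdorff_pre_less_imp_cover:
  assumes "hausdorff_pre s \<delta> A < b"
  shows "\<exists>C. (A \<subseteq> (\<Union>i. C i) \<and> (\<forall>i. diameter (C i) \<le> \<delta>)) \<and> (\<Sum>i. hd_weight s (C i)) < b"
  using assms unfolding hausdorff_pre_def INF_less_iff Bex_def mem_Collect_eq .

lemma hausdorff_pre_le_interval_cover:
  assumes "finite F" and "A \<subseteq> (\<Union>c\<in>F. {c - r..c + r})" and "0 < r" and "2 * r \<le> \<delta>"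
  shows "hausdorff_pre s \<delta> A \<le> ennreal (card F * (2 * r) powr s)"
proof -
  obtain f where f: "bij_betw f {0..<card F} F"
    using ex_bij_betw_nat_finite[OF assms(1)] by blast
  define C where "C i = (if i < card F then {f i - r..f i + r} else {})" for i
  have cover: "A \<subseteq> (\<Union>i. C i)"
  proof
    fix x assume "x \<in> A"
    then obtain c where "c \<in> F" "x \<in> {c - r..c + r}" using assms(2) by blast
    moreover obtain i where "i < card F" "f i = c"
      using f \<open>c \<in> F\<close> by (metis atLeastLessThan_iff bij_betw_def imageE)
    ultimately show "x \<in> (\<Union>i. C i)" by (auto simp: C_def)
  qed
  have diam: "diameter (C i) \<le> \<delta>" for i
    using assms(3,4) by (simp add: C_def)
  have weight: "hd_weight s (C i) = (if i < card F then ennreal ((2 * r) powr s) else 0)" for i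
    using assms(3) by (auto simp: C_def hd_weight_def)
  have "hausdorff_pre s \<delta> A \<le> (\<Sum>i. hd_weight s (C i))"
    using cover diam by (rule hausdorff_pre_le_cover)
  also have "\<dots> = (\<Sum>i<card F. ennreal ((2 * r) powr s))"
    unfolding weight by (subst suminf_finite[of "{..<card F}"]) auto
  also have "\<dots> = ennreal (card F * (2 * r) powr s)"
    by (simp add: ennreal_of_nat_eq_real_of_nat ennreal_mult)
  finally show ?thesis .
qed

lemma hausdorff_pre_UN_eq_0:
  fixes A :: "nat \<Rightarrow> real set"
  assumes "\<And>K. hausdorff_pre s \<delta> (A K) = 0"
  shows "hausdorff_pre s \<delta> (\<Union>K. A K) = 0"
proof -
  have "hausdorff_pre s \<delta> (\<Union>K. A K) \<le> 0"
  proof (rule ennreal_le_epsilon)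
    fix e :: real assume "0 < e"
    have "\<forall>K. \<exists>C. (A K \<subseteq> (\<Union>i. C i) \<and> (\<forall>i. diameter (C i) \<le> \<delta>)) \<and>
              (\<Sum>i. hd_weight s (C i)) < ennreal (e * (1/2) ^ Suc K)"
      using assms \<open>0 < e\<close> by (intro allI hausdorff_pre_less_imp_cover) simp
    then obtain C where C: "\<forall>K. (A K \<subseteq> (\<Union>i. C K i) \<and> (\<forall>i. diameter (C K i) \<le> \<delta>)) \<and>
        (\<Sum>i. hd_weight s (C K i)) < ennreal (e * (1/2) ^ Suc K)"
      by metis
    define D where "D i = (case prod_decode i of (K, j) \<Rightarrow> C K j)" for i
    have "(\<Union>K. A K) \<subseteq> (\<Union>i. D i)"
    proof
      fix x assume "x \<in> (\<Union>K. A K)"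
      then obtain K j where "x \<in> C K j" using C by blast
      then have "x \<in> D (prod_encode (K, j))" by (simp add: D_def)
      then show "x \<in> (\<Union>i. D i)" by blast
    qed
    moreover have "diameter (D i) \<le> \<delta>" for i
      using C by (simp add: D_def split: prod.split)
    ultimately have "hausdorff_pre s \<delta> (\<Union>K. A K) \<le> (\<Sum>i. hd_weight s (D i))"
      by (rule hausdorff_pre_le_cover)
    also have "\<dots> \<le> ennreal e"
    proof -
      have "(\<Sum>i. hd_weight s (D i)) = (\<Sum>K. \<Sum>i. hd_weight s (C K i))"
        unfolding D_def by (intro suminf_ennreal_2dimen) (simp add: case_prod_beta)
      also have "\<dots> \<le> (\<Sum>K. ennreal (e * (1/2) ^ Suc K))"
        using C by (intro suminf_le less_imp_le) auto
      also have "\<dots> = ennreal (e * 1)"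
        using \<open>0 < e\<close> by (intro suminf_ennreal_eq sums_mult power_half_series) auto
      finally show ?thesis by simp
    qed
    finally show "hausdorff_pre s \<delta> (\<Union>K. A K) \<le> 0 + ennreal e" by simp
  qed
  then show ?thesis by simp
qed

lemma hausdorff_pre_eq_0_if_interval_covers:
  assumes "\<And>N. finite (F N)" and "\<And>N. A \<subseteq> (\<Union>c\<in>F N. {c - r N..c + r N})"
    and "\<And>N. 0 < r N" and "r \<longlonglongrightarrow> 0" and "(\<lambda>N. card (F N) * (2 * r N) powr s) \<longlonglongrightarrow> 0"
    and "0 < \<delta>"
  shows "hausdorff_pre s \<delta> A = 0"
proof -
  have "hausdorff_pre s \<delta> A \<le> 0"
  proof (rule ennreal_le_epsilon)
    fix e :: real assume "0 < e"
    have "\<forall>\<^sub>F N in sequentially. r N < \<delta> / 2"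
      using assms(4,6) by (intro order_tendstoD(2)) auto
    moreover have "\<forall>\<^sub>F N in sequentially. card (F N) * (2 * r N) powr s < e"
      using assms(5) \<open>0 < e\<close> by (rule order_tendstoD(2))
    ultimately obtain N where N: "r N < \<delta> / 2" "card (F N) * (2 * r N) powr s < e"
      using eventually_happens'[OF sequentially_bot] eventually_conj by blast
    have "hausdorff_pre s \<delta> A \<le> ennreal (card (F N) * (2 * r N) powr s)"
      using assms(1-3) N(1) by (intro hausdorff_pre_le_interval_cover) auto
    also have "\<dots> \<le> ennreal e" using N(2) by (intro ennreal_leI) simp
    finally show "hausdorff_pre s \<delta> A \<le> 0 + ennreal e" by simp
  qed
  then show ?thesis by simp
qed

lemma hausdorff_dim_eq_0I:
  assumes "\<And>s \<delta>. 0 < s \<Longrightarrow> 0 < \<delta> \<Longrightarrow> hausdorff_pre s \<delta> A = 0"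
  shows "hausdorff_dim A = 0"
proof -
  define S where "S = {s. s \<ge> 0 \<and> hausdorff_measure s A = 0}"
  have pos: "t \<in> S" if "0 < t" for t
    using assms that by (simp add: S_def hausdorff_measure_def)
  have "bdd_below S" by (auto simp: S_def intro: bdd_belowI[of _ 0])
  then have "Inf S \<le> t" if "0 < t" for t
    using pos[OF that] by (rule cInf_lower[rotated])
  then have "Inf S \<le> 0" by (rule dense_ge)
  moreover have "0 \<le> Inf S"
  proof (rule cInf_greatest)
    show "S \<noteq> {}" using pos[of 1] by auto
  qed (simp add: S_def)
  ultimately show ?thesis unfolding hausdorff_dim_def S_def by simp
qed

section \<open>Uniqueness of the expansion\<close>

definition O1_weight :: "(nat \<Rightarrow> nat) \<Rightarrow> nat \<Rightarrow> real" where
  "O1_weight g n = 1 / (\<Prod>j\<le>n. real (\<Sum>i\<le>j. g i))"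

lemma O1_term_eq_weight: "O1_term g n = (-1) ^ n * O1_weight g n"
  by (simp add: O1_term_def O1_weight_def)

lemma O1_weight_Suc: "O1_weight g (Suc n) = O1_weight g n / real (\<Sum>i\<le>Suc n. g i)"
  by (simp add: O1_weight_def)

lemma real_partial_sum_ge:
  assumes "\<And>k. 1 \<le> g k"
  shows "real (Suc j) \<le> real (\<Sum>i\<le>j. g i)"
proof -
  have "Suc j \<le> (\<Sum>i\<le>j. g i)"
    using sum_mono[of "{..j}" "\<lambda>_. 1::nat" g] assms by simp
  then show ?thesis by (simp only: of_nat_le_iff)
qed

lemma fact_le_prod_partial_sums:
  assumes "\<And>k. 1 \<le> g k"
  shows "fact N \<le> (\<Prod>j<N. real (\<Sum>i\<le>j. g i))"
proof -
  have "fact N = (\<Prod>j<N. real (Suc j))"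
    by (simp add: fact_prod_Suc atLeast0LessThan)
  also have "\<dots> \<le> (\<Prod>j<N. real (\<Sum>i\<le>j. g i))"
    using real_partial_sum_ge[of g, OF assms] by (intro prod_mono) auto
  finally show ?thesis .
qed

lemma O1_weight_le:
  assumes "\<And>k. 1 \<le> g k"
  shows "O1_weight g n \<le> 1 / fact (Suc n)"
proof -
  have P: "fact (Suc n) \<le> (\<Prod>j\<le>n. real (\<Sum>i\<le>j. g i))"
    using fact_le_prod_partial_sums[of g, OF assms, of "Suc n"] by (simp add: lessThan_Suc_atMost)
  have "(0::real) < fact (Suc n)" by simp
  with P have "0 < fact (Suc n) * (\<Prod>j\<le>n. real (\<Sum>i\<le>j. g i))"
    by (intro mult_pos_pos) linarith+
  then show ?thesis
    unfolding O1_weight_def by (intro divide_left_mono[OF P]) (auto simp: mult.commute)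
qed

lemma O1_weight_pos:
  assumes "\<And>k. 1 \<le> g k"
  shows "0 < O1_weight g n"
proof -
  have "0 < real (\<Sum>i\<le>j. g i)" for j
    using real_partial_sum_ge[of g, OF assms, of j] by linarith
  then show ?thesis unfolding O1_weight_def by (simp add: prod_pos)
qed

lemma O1_weight_Suc_less:
  assumes "\<And>k. 1 \<le> g k"
  shows "O1_weight g (Suc n) < O1_weight g n"
proof -
  have "1 < real (\<Sum>i\<le>Suc n. g i)"
    using real_partial_sum_ge[of g, OF assms, of "Suc n"] by linarith
  then show ?thesis
    unfolding O1_weight_Suc using O1_weight_pos[of g, OF assms] by (simp add: divide_less_eq)
qed

lemma O1_weight_tendsto_0:
  assumes "\<And>k. 1 \<le> g k"
  shows "O1_weight g \<longlonglongrightarrow> 0"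
proof (rule Lim_null_comparison)
  show "\<forall>\<^sub>F n in sequentially. norm (O1_weight g n) \<le> 1 ^ Suc n / fact (Suc n)"
    using O1_weight_le[of g, OF assms] O1_weight_pos[of g, OF assms] by (simp add: less_imp_le)
  show "(\<lambda>n. 1 ^ Suc n / fact (Suc n) :: real) \<longlonglongrightarrow> 0"
    using power_div_fact_tendsto_0 by (rule LIMSEQ_Suc)
qed

lemma O1_expansion_sum_weights:
  "O1_expansion x g \<Longrightarrow> x = (\<Sum>n. (-1) ^ n * O1_weight g n)"
  unfolding O1_expansion_def O1_term_eq_weight by (simp add: sums_iff)

lemma abs_O1_expansion_partial_sum_le:
  assumes "O1_expansion x g"
  shows "\<bar>x - (\<Sum>n<N. O1_term g n)\<bar> \<le> 1 / fact N"
proof -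
  have g: "\<And>k. 1 \<le> g k" using assms by (simp add: O1_expansion_def)
  have "\<bar>x - (\<Sum>n<N. O1_term g n)\<bar> \<le> O1_weight g N"
    unfolding O1_expansion_sum_weights[OF assms] O1_term_eq_weight
    using O1_weight_tendsto_0[of g, OF g] O1_weight_Suc_less[of g, OF g]
    by (intro alternating_sum_remainder less_imp_le)
  also have "\<dots> \<le> 1 / fact (Suc N)" by (rule O1_weight_le[of g, OF g])
  also have "\<dots> \<le> 1 / fact N" by (intro divide_left_mono fact_mono) auto
  finally show ?thesis .
qed

lemma O1_expansion_first_symbol:
  assumes "O1_expansion y g"
  shows "g 0 = nat \<lfloor>1 / y\<rfloor>"
proof -
  have g: "\<And>k. 1 \<le> g k" using assms by (simp add: O1_expansion_def)
  define a where "a = real (g 0)"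
  have a: "1 \<le> a" using g[of 0] by (simp add: a_def)
  have w0: "O1_weight g 0 = 1 / a" by (simp add: O1_weight_def a_def)
  have "O1_weight g 1 = (1 / a) / (a + real (g 1))"
    by (simp add: O1_weight_def a_def numeral_eq_Suc atMost_Suc)
  also have "\<dots> \<le> (1 / a) / (a + 1)"
    using g[of 1] a by (intro divide_left_mono) auto
  finally have "O1_weight g 1 \<le> (1 / a) / (a + 1)" .
  moreover have "1 / a - (1 / a) / (a + 1) = 1 / (a + 1)"
    using a by (simp add: field_simps) (smt (verit) mult_nonneg_nonneg)
  ultimately have "1 / (a + 1) \<le> O1_weight g 0 - O1_weight g 1"
    unfolding w0 by linarith
  txt \<open>The first two partial sums trap y in the interval (1/(g 0 + 1), 1/g 0].\<close>
  note bounds = alternating_sum_first_bounds[of "O1_weight g",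
      OF O1_weight_tendsto_0[of g, OF g] O1_weight_Suc_less[of g, OF g],
      folded O1_expansion_sum_weights[OF assms]]
  have "1 / (a + 1) < y" "y \<le> 1 / a"
    using bounds \<open>1 / (a + 1) \<le> _\<close> w0 by linarith+
  then have "a \<le> 1 / y" "1 / y < a + 1"
    using a by (auto simp: field_simps)
  then have "\<lfloor>1 / y\<rfloor> = int (g 0)" by (simp add: floor_eq_iff a_def)
  then show ?thesis by simp
qed

definition O1_shift :: "(nat \<Rightarrow> nat) \<Rightarrow> nat \<Rightarrow> nat" where
  "O1_shift g k = (if k = 0 then g 0 + g 1 else g (Suc k))"

lemma sum_O1_shift: "(\<Sum>i\<le>j. O1_shift g i) = (\<Sum>i\<le>Suc j. g i)"
  by (induction j) (auto simp: O1_shift_def)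

lemma O1_term_O1_shift:
  assumes "g 0 \<noteq> 0"
  shows "O1_term (O1_shift g) n = - real (g 0) * O1_term g (Suc n)"
proof -
  have "(\<Prod>j\<le>Suc n. real (\<Sum>i\<le>j. g i)) = real (g 0) * (\<Prod>j\<le>n. real (\<Sum>i\<le>Suc j. g i))"
    by (subst prod.atMost_shift) (simp add: lessThan_Suc_atMost)
  then show ?thesis
    using assms unfolding O1_term_def sum_O1_shift by (simp add: field_simps)
qed

lemma O1_expansion_shift:
  assumes "O1_expansion y g"
  shows "O1_expansion (1 - real (g 0) * y) (O1_shift g)"
proof -
  have g: "\<And>k. 1 \<le> g k" and y: "O1_term g sums y"
    using assms by (auto simp: O1_expansion_def)
  have "(\<lambda>n. O1_term g (Suc n)) sums (y - O1_term g 0)"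
    using y by (subst sums_Suc_iff) simp
  then have "(\<lambda>n. - real (g 0) * O1_term g (Suc n)) sums (- real (g 0) * (y - O1_term g 0))"
    by (rule sums_mult)
  moreover have "- real (g 0) * (y - O1_term g 0) = 1 - real (g 0) * y"
    using g[of 0] by (simp add: O1_term_def field_simps)
  moreover have "O1_term (O1_shift g) = (\<lambda>n. - real (g 0) * O1_term g (Suc n))"
    using g[of 0] by (simp add: fun_eq_iff O1_term_O1_shift)
  moreover have "\<forall>k. 1 \<le> O1_shift g k"
    using g by (simp add: O1_shift_def add_increasing2)
  ultimately show ?thesis unfolding O1_expansion_def by simp
qed

lemma O1_expansion_unique:
  assumes "O1_expansion y g" and "O1_expansion y h"
  shows "g = h"
proof
  fix n show "g n = h n"
    using assms
  proof (induction n arbitrary: g h y)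
    case 0
    then show ?case by (simp add: O1_expansion_first_symbol)
  next
    case (Suc n)
    have "g 0 = h 0" using Suc.prems by (simp add: O1_expansion_first_symbol)
    then have "O1_shift g n = O1_shift h n"
      using Suc.IH[OF O1_expansion_shift[OF Suc.prems(1)]] O1_expansion_shift[OF Suc.prems(2)]
      by simp
    then show ?case using \<open>g 0 = h 0\<close> by (cases n) (auto simp: O1_shift_def)
  qed
qed

section \<open>Existence: the greedy expansion\<close>

definition O1_map :: "real \<Rightarrow> real" where
  "O1_map y = 1 - of_int \<lfloor>1 / y\<rfloor> * y"

lemma O1_map_irrational:
  assumes "0 < y" "y < 1" "y \<notin> \<rat>"
  shows "1 \<le> \<lfloor>1 / y\<rfloor>" and "0 < O1_map y" and "O1_map y < 1 / (of_int \<lfloor>1 / y\<rfloor> + 1)"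
    and "O1_map y < 1" and "O1_map y \<notin> \<rat>"
proof -
  define m where "m = \<lfloor>1 / y\<rfloor>"
  have "1 < 1 / y" using assms by simp
  then show m1: "1 \<le> \<lfloor>1 / y\<rfloor>" by linarith
  have "1 / y \<noteq> of_int m"
  proof
    assume "1 / y = of_int m"
    then have "1 / (1 / y) \<in> \<rat>" by simp
    then show False using assms(3) by simp
  qed
  then have "of_int m < 1 / y" "1 / y < of_int m + 1" unfolding m_def by linarith+
  then have "of_int m * y < 1" "1 < (of_int m + 1) * y" using assms by (simp_all add: field_simps)
  then show "0 < O1_map y" by (simp add: O1_map_def m_def)
  have "of_int m * 1 < of_int m * ((of_int m + 1) * y)"
    using \<open>1 < (of_int m + 1) * y\<close> m1 by (intro mult_strict_left_mono) (auto simp: m_def)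
  moreover have "0 < of_int m + (1::real)" using m1[folded m_def] by simp
  ultimately show upper: "O1_map y < 1 / (of_int \<lfloor>1 / y\<rfloor> + 1)"
    unfolding O1_map_def m_def[symmetric] by (simp add: field_simps)
  also have "\<dots> \<le> 1" using \<open>0 < of_int m + (1::real)\<close> assms(1) unfolding m_def by simp
  finally show "O1_map y < 1" .
  show "O1_map y \<notin> \<rat>"
  proof
    assume "O1_map y \<in> \<rat>"
    then have "(1 - O1_map y) / of_int m \<in> \<rat>" by (simp add: m_def)
    moreover have "(1 - O1_map y) / of_int m = y"
      unfolding O1_map_def m_def[symmetric] using m1[folded m_def] by simp
    ultimately show False using assms(3) by simp
  qed
qed

context
  fixes x :: real
  assumes x: "0 < x" "x < 1" "x \<notin> \<rat>"
begin

lemma O1_map_iterate_irrational: "0 < (O1_map ^^ k) x \<and> (O1_map ^^ k) x < 1 \<and> (O1_map ^^ k) x \<notin> \<rat>"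
proof (induction k)
  case 0
  then show ?case using x by simp
next
  case (Suc k)
  then show ?case using O1_map_irrational[of "(O1_map ^^ k) x"] by simp
qed

lemma floor_inverse_O1_map_iterate_ge_1: "1 \<le> \<lfloor>1 / (O1_map ^^ k) x\<rfloor>"
  using O1_map_iterate_irrational[of k] by (intro O1_map_irrational(1)) auto

text \<open>
  (O1_map ^^ k) x is the k-th remainder of x; O1_level k = \<lfloor>1 / (O1_map ^^ k) x\<rfloor> is the
  partial sum g_0 + \<dots> + g_k of the symbols, which O1_greedy recovers as increments.
\<close>

definition O1_level :: "nat \<Rightarrow> nat" where
  "O1_level k = nat \<lfloor>1 / (O1_map ^^ k) x\<rfloor>"

lemma of_nat_O1_level: "real (O1_level k) = of_int \<lfloor>1 / (O1_map ^^ k) x\<rfloor>"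
proof -
  have "0 \<le> \<lfloor>1 / (O1_map ^^ k) x\<rfloor>" using floor_inverse_O1_map_iterate_ge_1[of k] by linarith
  then show ?thesis unfolding O1_level_def by simp
qed

lemma O1_level_ge_1: "1 \<le> O1_level k"
proof -
  have "0 < \<lfloor>1 / (O1_map ^^ k) x\<rfloor>" using floor_inverse_O1_map_iterate_ge_1[of k] by linarith
  then show ?thesis unfolding O1_level_def by (simp add: Suc_le_eq)
qed

lemma O1_map_iterate_Suc: "(O1_map ^^ Suc k) x = 1 - real (O1_level k) * (O1_map ^^ k) x"
  by (simp add: O1_map_def of_nat_O1_level)

lemma O1_level_less_Suc: "O1_level k < O1_level (Suc k)"
proof -
  let ?y = "(O1_map ^^ Suc k) x"
  have "?y < 1 / (real (O1_level k) + 1)"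
    using O1_map_iterate_irrational[of k] O1_map_irrational(3) by (simp add: of_nat_O1_level)
  moreover have "0 < ?y" using O1_map_iterate_irrational[of "Suc k"] by blast
  ultimately have "real (O1_level k) + 1 < 1 / ?y"
    by (simp add: field_simps)
  then show ?thesis unfolding O1_level_def[of "Suc k"] by linarith
qed

definition O1_greedy :: "nat \<Rightarrow> nat" where
  "O1_greedy k = (if k = 0 then O1_level 0 else O1_level k - O1_level (k - 1))"

lemma sum_O1_greedy: "(\<Sum>i\<le>j. O1_greedy i) = O1_level j"
proof (induction j)
  case 0
  then show ?case by (simp add: O1_greedy_def)
next
  case (Suc j)
  then show ?case using O1_level_less_Suc[of j] by (simp add: O1_greedy_def)
qed

lemma O1_greedy_ge_1: "1 \<le> O1_greedy k"
  using O1_level_ge_1 O1_level_less_Suc[of "k - 1"] by (cases k) (auto simp: O1_greedy_def)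

lemma O1_greedy_partial_sum:
  "x = (\<Sum>n<N. O1_term O1_greedy n) + (-1) ^ N * (O1_map ^^ N) x / (\<Prod>j<N. real (O1_level j))"
proof (induction N)
  case 0
  then show ?case by simp
next
  case (Suc N)
  define P where "P = (\<Prod>j<N. real (O1_level j))"
  define m where "m = real (O1_level N)"
  define y where "y = (O1_map ^^ N) x"
  have "0 < P" "0 < m"
    using O1_level_ge_1 by (auto simp: P_def m_def Suc_le_eq intro!: prod_pos)
  have "O1_term O1_greedy N = (-1) ^ N / (P * m)"
    unfolding O1_term_def sum_O1_greedy by (simp add: P_def m_def lessThan_Suc_atMost[symmetric])
  moreover have "(-1) ^ N * y / P = (-1) ^ N / (P * m) + (-1) ^ Suc N * (1 - m * y) / (P * m)"
    using \<open>0 < P\<close> \<open>0 < m\<close> by (simp add: field_simps)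
  ultimately have "x = (\<Sum>n<Suc N. O1_term O1_greedy n) + (-1) ^ Suc N * (1 - m * y) / (P * m)"
    using Suc.IH by (simp add: P_def y_def)
  moreover have "(\<Prod>j<Suc N. real (O1_level j)) = P * m" by (simp add: P_def m_def)
  moreover have "(O1_map ^^ Suc N) x = 1 - m * y"
    unfolding O1_map_iterate_Suc by (simp add: m_def y_def)
  ultimately show ?case by (simp only:)
qed

lemma O1_expansion_greedy: "O1_expansion x O1_greedy"
proof -
  define R where "R N = (-1) ^ N * (O1_map ^^ N) x / (\<Prod>j<N. real (O1_level j))" for N
  have bound: "norm (R N) \<le> 1 / fact N" for N
  proof -
    have "fact N \<le> (\<Prod>j<N. real (O1_level j))"
      using fact_le_prod_partial_sums[of O1_greedy, OF O1_greedy_ge_1] by (simp add: sum_O1_greedy)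
    moreover have "0 < (O1_map ^^ N) x" "(O1_map ^^ N) x < 1" using O1_map_iterate_irrational by auto
    ultimately show ?thesis
      unfolding R_def by (simp add: abs_mult power_abs frac_le order.strict_trans2[OF fact_gt_zero])
  qed
  have "R \<longlonglongrightarrow> 0"
  proof (rule Lim_null_comparison)
    show "\<forall>\<^sub>F N in sequentially. norm (R N) \<le> 1 / fact N" using bound by simp
    show "(\<lambda>N. 1 / fact N :: real) \<longlonglongrightarrow> 0" using power_div_fact_tendsto_0[of 1] by simp
  qed
  then have "(\<lambda>N. x - R N) \<longlonglongrightarrow> x"
    using tendsto_diff[OF tendsto_const, of R 0 _ x] by simp
  moreover have "(\<Sum>n<N. O1_term O1_greedy n) = x - R N" for N
    using O1_greedy_partial_sum[of N] by (simp add: R_def)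
  ultimately show ?thesis
    unfolding O1_expansion_def sums_def using O1_greedy_ge_1 by simp
qed

end

lemma O1_expansion_O1_symbols:
  assumes "0 < x" "x < 1" "x \<notin> \<rat>"
  shows "O1_expansion x (O1_symbols x)"
proof -
  have "\<exists>!g. O1_expansion x g"
    using O1_expansion_greedy[OF assms] O1_expansion_unique by blast
  then show ?thesis unfolding O1_symbols_def by (rule theI')
qed

section \<open>Sets of numbers with bounded symbols\<close>

lemma O1_term_restrict: "n < N \<Longrightarrow> O1_term (restrict g {..<N}) n = O1_term g n"
  unfolding O1_term_def by (intro arg_cong2[where f = "(/)"] prod.cong sum.cong) auto

definition O1_bounded :: "nat \<Rightarrow> real set" where
  "O1_bounded K = {x. x \<in> {0<..<1} \<and> x \<notin> \<rat> \<and> (\<forall>k. O1_symbols x k \<le> K)}"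

definition O1_prefix_sums :: "nat \<Rightarrow> nat \<Rightarrow> real set" where
  "O1_prefix_sums K N = (\<lambda>p. \<Sum>n<N. O1_term p n) ` (\<Pi>\<^sub>E n\<in>{..<N}. {1..K})"

lemma finite_O1_prefix_sums: "finite (O1_prefix_sums K N)"
  by (simp add: O1_prefix_sums_def finite_PiE)

lemma card_O1_prefix_sums_le: "card (O1_prefix_sums K N) \<le> K ^ N"
  using card_image_le[of "\<Pi>\<^sub>E n\<in>{..<N}. {1..K}"]
  by (simp add: O1_prefix_sums_def finite_PiE card_PiE)

lemma O1_bounded_subset_intervals:
  "O1_bounded K \<subseteq> (\<Union>c\<in>O1_prefix_sums K N. {c - 1 / fact N..c + 1 / fact N})"
proof
  fix x assume "x \<in> O1_bounded K"
  then have x: "0 < x" "x < 1" "x \<notin> \<rat>" and K: "\<And>k. O1_symbols x k \<le> K"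
    by (auto simp: O1_bounded_def)
  note expansion = O1_expansion_O1_symbols[OF x]
  define p where "p = restrict (O1_symbols x) {..<N}"
  have "p \<in> (\<Pi>\<^sub>E n\<in>{..<N}. {1..K})"
    using expansion K by (auto simp: p_def O1_expansion_def)
  then have "(\<Sum>n<N. O1_term (O1_symbols x) n) \<in> O1_prefix_sums K N"
    unfolding O1_prefix_sums_def by (rule image_eqI[rotated]) (simp add: p_def O1_term_restrict)
  moreover have "x \<in> {(\<Sum>n<N. O1_term (O1_symbols x) n) - 1 / fact N..(\<Sum>n<N. O1_term (O1_symbols x) n) + 1 / fact N}"
    using abs_O1_expansion_partial_sum_le[OF expansion, of N] by (simp add: abs_le_iff)
  ultimately show "x \<in> (\<Union>c\<in>O1_prefix_sums K N. {c - 1 / fact N..c + 1 / fact N})"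
    by blast
qed

lemma hausdorff_pre_O1_bounded:
  assumes "0 < s" and "0 < \<delta>"
  shows "hausdorff_pre s \<delta> (O1_bounded K) = 0"
proof (rule hausdorff_pre_eq_0_if_interval_covers)
  show "(\<lambda>N. 1 / fact N :: real) \<longlonglongrightarrow> 0"
    using power_div_fact_tendsto_0[of 1] by simp
  show "(\<lambda>N. card (O1_prefix_sums K N) * (2 * (1 / fact N)) powr s) \<longlonglongrightarrow> 0"
  proof (rule Lim_null_comparison)
    show "\<forall>\<^sub>F N in sequentially.
        norm (card (O1_prefix_sums K N) * (2 * (1 / fact N)) powr s) \<le> real K ^ N * (2 / fact N) powr s"
      using card_O1_prefix_sums_le[of K] by (intro always_eventually allI)
        (simp add: mult_right_mono flip: of_nat_power)
  qed (rule power_mult_fact_powr_tendsto_0[OF assms(1)])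
qed (use finite_O1_prefix_sums O1_bounded_subset_intervals assms(2) in auto)

theorem corollary1:
  shows "hausdorff_dim {x :: real. x \<in> {0<..<1} \<and> x \<notin> \<rat> \<and>
            (\<exists>K :: nat. \<forall>k. O1_symbols x k \<le> K)} = 0"
proof -
  have "{x :: real. x \<in> {0<..<1} \<and> x \<notin> \<rat> \<and> (\<exists>K :: nat. \<forall>k. O1_symbols x k \<le> K)} =
      (\<Union>K. O1_bounded K)"
    by (auto simp: O1_bounded_def)
  then show ?thesis
    using hausdorff_pre_O1_bounded
    by (simp add: hausdorff_dim_eq_0I hausdorff_pre_UN_eq_0)
qed

end
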